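(* Let $u\in C^2[0,\pi]$ with $u(x)>0$ for all $x\in[0,\pi]$, let $p,q\in\mathbb{N}^+$ with $\gcd(p,q)=1$, and let $\mu_{mn}=\lambda_n^2-\left(\frac{q}{p}m\right)^2$ for $m\in\mathbb{N}=\{0,1,2,\dots\}$, $n\in\mathbb{N}^+$, where $\lambda_1^2<\lambda_2^2<\cdots$ are the eigenvalues of the Dirichlet Sturm–Liouville problem $(u(x)\varphi'(x))'=-\lambda^2u(x)\varphi(x)$, $\varphi(0)=\varphi(\pi)=0$. Assume $p$ is even. Then, for odd $m$, the eigenvalues $\mu_{mn}$ are isolated and have finite multiplicity; that is, every element of the set $\{\mu_{mn}: m \text{ odd},\ n\in\mathbb{N}^+\}$ is an isolated point of this set and is equal to $\mu_{mn}$ for only finitely many pairs $(m,n)$ with $m$ odd, $n\in\mathbb{N}^+$.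
   Context: The $\mu_{mn}$ are the eigenvalues of the linear wave operator $L$ associated with $u(x)y_{tt}-(u(x)y_x)_x$ on $T$-periodic (with $T=2\pi p/q$) functions satisfying Dirichlet conditions at $x=0,\pi$, with eigenfunctions $\varphi_n(x)\cos\frac{q}{p}mt$, $\varphi_n(x)\sin\frac{q}{p}mt$, where $\varphi_n$ is the eigenfunction corresponding to $\lambda_n^2$. *)

theory Defs
  imports "HOL-Analysis.Analysis"
begin

definition C2_on_0pi :: "(real \<Rightarrow> real) \<Rightarrow> bool" where
  "C2_on_0pi u \<longleftrightarrow> (\<exists>u' u''.
     (\<forall>x\<in>{0..pi}. (u has_real_derivative u' x) (at x within {0..pi})) \<and>
     (\<forall>x\<in>{0..pi}. (u' has_real_derivative u'' x) (at x within {0..pi})) \<and>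
     continuous_on {0..pi} u'')"

definition dirichlet_SL_eigenvalue :: "(real \<Rightarrow> real) \<Rightarrow> real \<Rightarrow> bool" where
  "dirichlet_SL_eigenvalue u ev \<longleftrightarrow> (\<exists>\<phi> \<phi>'.
     (\<forall>x\<in>{0..pi}. (\<phi> has_real_derivative \<phi>' x) (at x within {0..pi})) \<and>
     (\<forall>x\<in>{0..pi}. ((\<lambda>y. u y * \<phi>' y) has_real_derivative (- ev * u x * \<phi> x))
                      (at x within {0..pi})) \<and>
     \<phi> 0 = 0 \<and> \<phi> pi = 0 \<and> (\<exists>x\<in>{0..pi}. \<phi> x \<noteq> 0))"

end

theory Submission
  imports Defs
begin

(*
  Write the equation as the first-order system phi' = psi / u, psi' = - ev u phi.
  Two facts show that every window |mu| <= B contains only finitely many mu_mn with m odd.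

  The eigenvalues form a closed set: by Gronwall estimates, solutions with fixed initial
  data depend continuously on ev, uniformly on [0, pi], so a limit of eigenvalues carries a
  limit of normalised eigenfunctions. As lam n is strictly increasing, only finitely many
  lam n lie below any bound.

  Large eigenvalues are close to integer squares: with omega = sqrt ev, the Wronskian of an
  eigenfunction with the Liouville approximation sin (omega x) / sqrt (u x) changes by
  O(1/omega) on [0, pi], whence |sin (pi omega)| = O(1/omega) and omega lies within
  O(1/omega) of an integer. As p is even while q and m are odd, k = q m / p keeps distance
  at least 1/p from the integers, so |ev - k^2| >= k / (2 p) once ev is large; hence a
  bounded window admits only boundedly many m.
*)

lemma DERIV_nonpos_imp_decreasing_within:
  fixes f f' :: "real \<Rightarrow> real"
  assumes "a \<le> b" "{a..b} \<subseteq> S"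
    and deriv: "\<And>x. x \<in> S \<Longrightarrow> (f has_real_derivative f' x) (at x within S)"
    and nonpos: "\<And>x. x \<in> {a..b} \<Longrightarrow> f' x \<le> 0"
  shows "f b \<le> f a"
proof (rule DERIV_nonpos_imp_decreasing_open[OF \<open>a \<le> b\<close>])
  have deriv_ab: "(f has_real_derivative f' x) (at x within {a..b})" if "x \<in> {a..b}" for x
    using deriv that assms(2) has_field_derivative_subset by blast
  show "continuous_on {a..b} f"
    using deriv_ab by (rule DERIV_continuous_on)
  fix x assume "a < x" "x < b"
  then show "\<exists>y. DERIV f x :> y \<and> y \<le> 0"
    using deriv_ab[of x] nonpos[of x] by (auto simp: at_within_Icc_at)
qed

lemma gronwall_linear:
  fixes F F' :: "real \<Rightarrow> real"
  assumes "A > 0"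
    and deriv: "\<And>x. x \<in> {a..b} \<Longrightarrow> (F has_real_derivative F' x) (at x within {a..b})"
    and growth: "\<And>x. x \<in> {a..b} \<Longrightarrow> F' x \<le> A * F x + B"
    and "x \<in> {a..b}"
  shows "F x + B / A \<le> (F a + B / A) * exp (A * (x - a))"
proof -
  define G where "G y = (F y + B / A) * exp (- A * y)" for y
  have G_deriv: "(G has_real_derivative (F' y - (A * F y + B)) * exp (- A * y)) (at y within {a..b})"
    if "y \<in> {a..b}" for y
    unfolding G_def using \<open>A > 0\<close> by (auto intro!: derivative_eq_intros deriv[OF that] simp: field_simps)
  have "G x \<le> G a"
    using \<open>x \<in> {a..b}\<close> growth
    by (intro DERIV_nonpos_imp_decreasing_within[OF _ _ G_deriv]) (auto simp: mult_nonpos_nonneg)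
  then have "(F x + B / A) * exp (- A * x) \<le> (F a + B / A) * exp (- A * a)"
    unfolding G_def .
  then have "(F x + B / A) * exp (- A * x) * exp (A * x) \<le> (F a + B / A) * exp (- A * a) * exp (A * x)"
    by (rule mult_right_mono) simp
  then show ?thesis
    by (simp add: mult.assoc exp_add[symmetric] algebra_simps)
qed

lemma gronwall_linear_backward:
  fixes F F' :: "real \<Rightarrow> real"
  assumes deriv: "\<And>x. x \<in> {a..b} \<Longrightarrow> (F has_real_derivative F' x) (at x within {a..b})"
    and growth: "\<And>x. x \<in> {a..b} \<Longrightarrow> - A * F x \<le> F' x"
    and "x \<in> {a..b}"
  shows "F x \<le> F b * exp (A * (b - x))"
proof -
  define G where "G y = - F y * exp (A * y)" for y
  have G_deriv: "(G has_real_derivative (- A * F y - F' y) * exp (A * y)) (at y within {a..b})"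
    if "y \<in> {a..b}" for y
    unfolding G_def by (auto intro!: derivative_eq_intros deriv[OF that] simp: algebra_simps)
  have "G b \<le> G x"
    using \<open>x \<in> {a..b}\<close> growth
    by (intro DERIV_nonpos_imp_decreasing_within[OF _ _ G_deriv]) (auto simp: mult_nonpos_nonneg)
  then have "F x * exp (A * x) \<le> F b * exp (A * b)"
    unfolding G_def by simp
  then have "F x * exp (A * x) * exp (- (A * x)) \<le> F b * exp (A * b) * exp (- (A * x))"
    by (intro mult_right_mono) auto
  then show ?thesis
    by (simp add: mult.assoc exp_add[symmetric] algebra_simps)
qed

lemma has_real_derivative_seq_limit:
  fixes f f' :: "nat \<Rightarrow> real \<Rightarrow> real"
  assumes "convex S"
    and deriv: "\<And>n x. x \<in> S \<Longrightarrow> (f n has_real_derivative f' n x) (at x within S)"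
    and lim: "\<And>x. x \<in> S \<Longrightarrow> (\<lambda>n. f n x) \<longlonglongrightarrow> F x"
    and uniform: "\<And>n x. x \<in> S \<Longrightarrow> \<bar>f' n x - G x\<bar> \<le> r n"
    and "r \<longlonglongrightarrow> 0" and "x \<in> S"
  shows "(F has_real_derivative G x) (at x within S)"
proof -
  have near: "\<forall>\<^sub>F n in sequentially. \<forall>y\<in>S. \<forall>h. norm (f' n y * h - G y * h) \<le> e * norm h"
    if "e > 0" for e :: real
    using order_tendstoD(2)[OF \<open>r \<longlonglongrightarrow> 0\<close> \<open>e > 0\<close>]
  proof (rule eventually_mono, intro ballI allI)
    fix n y h assume "r n < e" "y \<in> S"
    have "norm (f' n y * h - G y * h) = \<bar>f' n y - G y\<bar> * \<bar>h\<bar>"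
      by (simp add: abs_mult[symmetric] left_diff_distrib)
    also have "\<dots> \<le> e * \<bar>h\<bar>"
      using uniform[OF \<open>y \<in> S\<close>, of n] \<open>r n < e\<close> by (intro mult_right_mono) auto
    finally show "norm (f' n y * h - G y * h) \<le> e * norm h" by simp
  qed
  have "\<exists>g. \<forall>y\<in>S. (\<lambda>n. f n y) \<longlonglongrightarrow> g y \<and> (g has_derivative (\<lambda>h. G y * h)) (at y within S)"
    by (rule has_derivative_sequence[where f=f and f'="\<lambda>n y h. f' n y * h" and g'="\<lambda>y h. G y * h",
          OF \<open>convex S\<close> _ near \<open>x \<in> S\<close> lim[OF \<open>x \<in> S\<close>]])
      (use deriv in \<open>simp add: has_field_derivative_def\<close>)
  then obtain g where g: "\<forall>y\<in>S. (\<lambda>n. f n y) \<longlonglongrightarrow> g y \<and> (g has_derivative (*) (G y)) (at y within S)"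
    by auto
  have "g y = F y" if "y \<in> S" for y
    using g lim that LIMSEQ_unique by blast
  then show ?thesis
    using g \<open>x \<in> S\<close> unfolding has_field_derivative_def
    by (metis has_derivative_transform)
qed

lemma convergent_if_sq_dist_le:
  fixes g e :: "nat \<Rightarrow> real"
  assumes "e \<longlonglongrightarrow> L" and dist: "\<And>n k. (g n - g k)\<^sup>2 \<le> K * \<bar>e n - e k\<bar>"
  shows "g \<longlonglongrightarrow> lim g" and "(g n - lim g)\<^sup>2 \<le> K * \<bar>e n - L\<bar>"
proof -
  have "Cauchy g"
  proof (rule metric_CauchyI)
    fix \<epsilon> :: real assume "\<epsilon> > 0"
    have "\<epsilon>\<^sup>2 / (\<bar>K\<bar> + 1) > 0" using \<open>\<epsilon> > 0\<close> by simp
    then obtain N where N: "\<And>n k. n \<ge> N \<Longrightarrow> k \<ge> N \<Longrightarrow> \<bar>e n - e k\<bar> < \<epsilon>\<^sup>2 / (\<bar>K\<bar> + 1)"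
      using CauchyD[OF LIMSEQ_imp_Cauchy[OF \<open>e \<longlonglongrightarrow> L\<close>]] by (metis real_norm_def)
    have "dist (g n) (g k) < \<epsilon>" if "n \<ge> N" "k \<ge> N" for n k
    proof -
      have "\<bar>K\<bar> * \<bar>e n - e k\<bar> \<le> \<bar>K\<bar> * (\<epsilon>\<^sup>2 / (\<bar>K\<bar> + 1))"
        using N[OF that] by (intro mult_left_mono) auto
      also have "\<dots> < \<epsilon>\<^sup>2"
        using \<open>\<epsilon> > 0\<close> by (simp add: field_simps)
      finally have "\<bar>g n - g k\<bar>\<^sup>2 < \<epsilon>\<^sup>2"
        using dist[of n k] abs_ge_self[of K] mult_right_mono[of K "\<bar>K\<bar>" "\<bar>e n - e k\<bar>"] by simp
      then show ?thesis
        using \<open>\<epsilon> > 0\<close> power_less_imp_less_base[of "\<bar>g n - g k\<bar>" 2 \<epsilon>]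
        by (simp add: dist_real_def)
    qed
    then show "\<exists>N. \<forall>n\<ge>N. \<forall>k\<ge>N. dist (g n) (g k) < \<epsilon>" by blast
  qed
  then show lim: "g \<longlonglongrightarrow> lim g"
    using Cauchy_convergent_iff convergent_LIMSEQ_iff by blast
  show "(g n - lim g)\<^sup>2 \<le> K * \<bar>e n - L\<bar>"
    by (rule LIMSEQ_le[of "\<lambda>k. (g n - g k)\<^sup>2" _ "\<lambda>k. K * \<bar>e n - e k\<bar>"])
      (use dist in \<open>auto intro!: tendsto_intros lim \<open>e \<longlonglongrightarrow> L\<close>\<close>)
qed

lemma tendsto_if_abs_diff_le:
  fixes g r :: "nat \<Rightarrow> real"
  assumes "\<And>n. \<bar>g n - G\<bar> \<le> r n" and "r \<longlonglongrightarrow> 0"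
  shows "g \<longlonglongrightarrow> G"
  using Lim_null_comparison[of "\<lambda>n. g n - G" r] assms by (simp add: LIM_zero_cancel)

lemma abs_mult_diff_mult_le:
  fixes a b c d :: real
  assumes "\<bar>a\<bar> \<le> B" and "\<bar>a - b\<bar> \<le> r"
  shows "\<bar>c * a - d * b\<bar> \<le> \<bar>c - d\<bar> * B + \<bar>d\<bar> * r"
proof -
  have "\<bar>c * a - d * b\<bar> = \<bar>(c - d) * a + d * (a - b)\<bar>"
    by (simp add: algebra_simps)
  also have "\<dots> \<le> \<bar>c - d\<bar> * \<bar>a\<bar> + \<bar>d\<bar> * \<bar>a - b\<bar>"
    by (metis abs_mult abs_triangle_ineq)
  also have "\<dots> \<le> \<bar>c - d\<bar> * B + \<bar>d\<bar> * r"
    using assms by (intro add_mono mult_left_mono) auto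
  finally show ?thesis .
qed

lemma Jordan_inequality:
  assumes "0 \<le> x" "x \<le> pi / 2"
  shows "2 / pi * x \<le> sin x"
proof -
  have "convex_on {0..pi} (\<lambda>x. - sin x)"
    by (rule f''_ge0_imp_convex[where f' = "\<lambda>x. - cos x" and f'' = sin])
      (auto intro!: derivative_eq_intros sin_ge_zero)
  moreover have "2 / pi * x \<in> {0..1}"
    using assms pi_gt_zero by (auto simp: field_simps)
  ultimately have "- sin ((1 - 2 / pi * x) *\<^sub>R 0 + (2 / pi * x) *\<^sub>R (pi / 2))
      \<le> (1 - 2 / pi * x) * - sin 0 + (2 / pi * x) * - sin (pi / 2)"
    by (intro convex_onD) auto
  then show ?thesis
    by simp
qed

lemma abs_sin_add_int_times_pi: "\<bar>sin (x + of_int j * pi)\<bar> = \<bar>sin x\<bar>"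
proof -
  have "sin (of_int j * pi) = 0"
    by (simp add: sin_zero_iff_int2)
  moreover have "\<bar>cos (of_int j * pi)\<bar> = 1"
    using sin_cos_squared_add[of "of_int j * pi"] calculation by (simp add: abs_square_eq_1)
  ultimately show ?thesis
    by (simp add: sin_add abs_mult)
qed

lemma dist_Ints_le_abs_sin:
  fixes w :: real
  obtains j :: int where "2 * \<bar>w - j\<bar> \<le> \<bar>sin (pi * w)\<bar>"
proof
  define j where "j = \<lfloor>w + 1 / 2\<rfloor>"
  have "\<bar>w - j\<bar> \<le> 1 / 2"
    unfolding j_def by linarith
  have "\<bar>sin (pi * w)\<bar> = \<bar>sin (pi * (w - j))\<bar>"
    using abs_sin_add_int_times_pi[of "pi * (w - j)" j] by (simp add: algebra_simps)
  also have "\<dots> = \<bar>sin (pi * \<bar>w - j\<bar>)\<bar>"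
    using sin_minus[of "pi * (w - j)"] by (cases "w - j \<ge> 0") (simp_all add: algebra_simps)
  also have "\<dots> = sin (pi * \<bar>w - j\<bar>)"
    using mult_left_mono[OF \<open>\<bar>w - j\<bar> \<le> 1 / 2\<close>, of pi] pi_gt_zero
    by (intro abs_of_nonneg sin_ge_zero) auto
  finally show "2 * \<bar>w - j\<bar> \<le> \<bar>sin (pi * w)\<bar>"
    using Jordan_inequality[of "pi * \<bar>w - j\<bar>"] \<open>\<bar>w - j\<bar> \<le> 1 / 2\<close> by simp
qed

lemma finite_sublevel_if_strict_mono_closed_range:
  fixes f :: "nat \<Rightarrow> real"
  assumes "strict_mono f" and "closed (range f)"
  shows "finite {n. f n \<le> B}"
proof (rule ccontr)
  assume "infinite {n. f n \<le> B}"
  have "f n \<le> B" for n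
  proof -
    obtain k where "n \<le> k" "f k \<le> B"
      using \<open>infinite {n. f n \<le> B}\<close> unfolding infinite_nat_iff_unbounded_le by auto
    then show ?thesis
      using strict_mono_leD[OF \<open>strict_mono f\<close> \<open>n \<le> k\<close>] by linarith
  qed
  then obtain L where "f \<longlonglongrightarrow> L" and le_L: "\<forall>n. f n \<le> L"
    using incseq_convergent[of f B] strict_mono_mono[OF \<open>strict_mono f\<close>]
    by (auto simp: incseq_def mono_def)
  then have "L \<in> range f"
    by (intro closed_sequential_limits[THEN iffD1, rule_format, OF \<open>closed (range f)\<close>, of f]) simp
  then obtain N where "L = f N"
    by auto
  moreover have "f N < f (Suc N)"
    using strict_monoD[OF \<open>strict_mono f\<close>, of N "Suc N"] by simp
  ultimately show False
    using le_L[rule_format, of "Suc N"] by linarith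
qed

lemma discrete_if_finite_sublevels:
  fixes f :: "'a \<Rightarrow> real"
  assumes finite_sublevel: "\<And>B. finite {i \<in> I. \<bar>f i\<bar> \<le> B}"
  shows "\<not> x islimpt f ` I" and "finite {i \<in> I. f i = x}"
proof -
  have "f ` I \<inter> ball x 1 \<subseteq> f ` {i \<in> I. \<bar>f i\<bar> \<le> \<bar>x\<bar> + 1}"
    by (auto simp: dist_real_def)
  then have "finite (f ` I \<inter> ball x 1)"
    using finite_sublevel by (rule finite_subset[OF _ finite_imageI])
  then show "\<not> x islimpt f ` I"
    unfolding islimpt_eq_infinite_ball by (meson zero_less_one)
  show "finite {i \<in> I. f i = x}"
    by (rule finite_subset[OF _ finite_sublevel[of "\<bar>x\<bar>"]]) auto
qed

section \<open>Frequencies far from the integers\<close>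

lemma odd_fraction_dist_Ints:
  fixes p q m :: nat and j :: int
  assumes "even p" "odd q" "odd m"
  shows "1 / real p \<le> \<bar>j - real q / real p * real m\<bar>"
proof (cases "p = 0")
  case False
  have "odd (j * int p - int q * int m)"
    using assms by simp
  then have "j * int p - int q * int m \<noteq> 0"
    by (metis even_zero)
  then have "1 \<le> \<bar>real_of_int (j * int p - int q * int m)\<bar>"
    by linarith
  also have "\<dots> = real p * \<bar>j - real q / real p * real m\<bar>"
    using False by (simp add: abs_mult[symmetric] field_simps)
  finally show ?thesis
    using False by (simp add: field_simps)
qed simp

lemma mult_le_abs_diff_squares:
  fixes d k w :: real
  assumes "0 \<le> k" "0 < w" "d \<le> \<bar>w - k\<bar>"
  shows "d * k \<le> \<bar>w\<^sup>2 - k\<^sup>2\<bar>"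
proof -
  have "d * k \<le> \<bar>w - k\<bar> * (w + k)"
    using assms by (intro mult_mono) auto
  also have "\<dots> = \<bar>(w - k) * (w + k)\<bar>"
    using assms by (simp add: abs_mult)
  also have "\<dots> = \<bar>w\<^sup>2 - k\<^sup>2\<bar>"
    by (simp add: algebra_simps power2_eq_square)
  finally show ?thesis .
qed

lemma half_dist_le_if_abs_sin_le:
  fixes w k \<delta> :: real
  assumes "\<bar>sin (pi * w)\<bar> \<le> \<delta>" and far: "\<forall>j::int. \<delta> \<le> \<bar>j - k\<bar>"
  shows "\<delta> / 2 \<le> \<bar>w - k\<bar>"
proof -
  obtain j :: int where "2 * \<bar>w - j\<bar> \<le> \<bar>sin (pi * w)\<bar>"
    by (rule dist_Ints_le_abs_sin)
  then have "2 * \<bar>w - j\<bar> \<le> \<delta>"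
    using assms(1) by (rule order_trans)
  then have "\<bar>w - j\<bar> \<le> \<delta> / 2"
    by simp
  moreover have "\<bar>j - k\<bar> \<le> \<bar>w - j\<bar> + \<bar>w - k\<bar>"
    using abs_triangle_ineq[of "j - w" "w - k"] by (simp add: abs_minus_commute)
  ultimately show ?thesis
    using far[rule_format, of j] by linarith
qed

lemma bounded_if_near_square:
  fixes E :: "real set" and B C \<delta> :: real
  assumes sin_bound: "\<And>ev. ev \<in> E \<Longrightarrow> 0 < ev \<Longrightarrow> \<bar>sin (pi * sqrt ev)\<bar> \<le> C / sqrt ev"
    and "0 < \<delta>"
  obtains K where "\<And>ev k. ev \<in> E \<Longrightarrow> 0 \<le> k \<Longrightarrow> \<forall>j::int. \<delta> \<le> \<bar>j - k\<bar> \<Longrightarrow> \<bar>ev - k\<^sup>2\<bar> \<le> B \<Longrightarrow> k \<le> K"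
proof
  define W where "W = \<bar>C\<bar> / \<delta> + 1"
  have "0 < W"
    unfolding W_def using \<open>0 < \<delta>\<close> by (simp add: add_nonneg_pos)
  fix ev k assume "ev \<in> E" "0 \<le> k" and far: "\<forall>j::int. \<delta> \<le> \<bar>j - k\<bar>" and "\<bar>ev - k\<^sup>2\<bar> \<le> B"
  show "k \<le> max (2 * B / \<delta>) (W\<^sup>2 + B + 1)"
  proof (cases "0 < ev \<and> W \<le> sqrt ev")
    case True
    define w where "w = sqrt ev"
    have "0 < w" "w\<^sup>2 = ev"
      using True \<open>0 < W\<close> by (auto simp: w_def)
    have "\<bar>sin (pi * w)\<bar> \<le> C / w"
      using sin_bound[OF \<open>ev \<in> E\<close>] True unfolding w_def by simp
    also have "\<dots> \<le> \<bar>C\<bar> / W"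
      using True \<open>0 < W\<close> by (intro frac_le) (auto simp: w_def)
    also have "\<dots> \<le> \<delta>"
      using \<open>0 < \<delta>\<close> \<open>0 < W\<close> by (simp add: W_def field_simps)
    finally have "\<delta> / 2 \<le> \<bar>w - k\<bar>"
      using far by (rule half_dist_le_if_abs_sin_le)
    then have "\<delta> / 2 * k \<le> \<bar>ev - k\<^sup>2\<bar>"
      using mult_le_abs_diff_squares[OF \<open>0 \<le> k\<close> \<open>0 < w\<close>] \<open>w\<^sup>2 = ev\<close> by blast
    then have "k \<le> 2 * B / \<delta>"
      using \<open>\<bar>ev - k\<^sup>2\<bar> \<le> B\<close> \<open>0 < \<delta>\<close> by (simp add: field_simps)
    then show ?thesis
      by simp
  next
    case False
    have "ev \<le> W\<^sup>2"
    proof (cases "0 < ev")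
      case True
      with False show ?thesis
        by (intro sqrt_le_D) auto
    qed (use zero_le_power2[of W] in linarith)
    moreover have "2 * k * 1 \<le> k\<^sup>2 + 1\<^sup>2"
      by (rule sum_squares_bound)
    ultimately show ?thesis
      using \<open>0 \<le> k\<close> \<open>\<bar>ev - k\<^sup>2\<bar> \<le> B\<close> by simp
  qed
qed

section \<open>The Sturm--Liouville system\<close>

lemma mult_two_mult_le_sum_squares:
  fixes c C x y :: real
  assumes "\<bar>c\<bar> \<le> C"
  shows "c * (2 * x * y) \<le> C * (x\<^sup>2 + y\<^sup>2)"
proof -
  have "\<bar>2 * x * y\<bar> \<le> x\<^sup>2 + y\<^sup>2"
    using sum_squares_bound[of x y] sum_squares_bound[of x "- y"] by (auto simp: abs_if)
  then have "\<bar>c\<bar> * \<bar>2 * x * y\<bar> \<le> C * (x\<^sup>2 + y\<^sup>2)"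
    using assms by (intro mult_mono) auto
  then show ?thesis
    using abs_ge_self[of "c * (2 * x * y)"] by (simp add: abs_mult)
qed

lemma difference_energy_growth:
  fixes a b c U e1 e2 Eb m M :: real
  assumes "0 < m" "m \<le> U" "U \<le> M" "\<bar>e1\<bar> \<le> Eb" "\<bar>e2\<bar> \<le> Eb"
  shows "2 * a * (b / U) + 2 * b * (e2 * U * c - e1 * U * (a + c))
    \<le> (1 / m + 3 * Eb * M) * (a\<^sup>2 + b\<^sup>2) + \<bar>e1 - e2\<bar> * M * c\<^sup>2"
proof -
  have "U > 0" using assms by linarith
  have "2 * a * (b / U) = (2 * a * b) / U" by simp
  also have "\<dots> \<le> (a\<^sup>2 + b\<^sup>2) / U"
    using sum_squares_bound[of a b] \<open>U > 0\<close> by (auto intro!: divide_right_mono)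
  also have "\<dots> \<le> (a\<^sup>2 + b\<^sup>2) / m"
    using assms by (intro divide_left_mono) auto
  finally have t1: "2 * a * (b / U) \<le> (a\<^sup>2 + b\<^sup>2) / m" .
  have t2: "- (e1 * U) * (2 * a * b) \<le> Eb * M * (a\<^sup>2 + b\<^sup>2)"
    using assms \<open>U > 0\<close> by (intro mult_two_mult_le_sum_squares) (auto simp: abs_mult intro!: mult_mono)
  have t3: "- ((e1 - e2) * U) * (2 * b * c) \<le> \<bar>e1 - e2\<bar> * M * (b\<^sup>2 + c\<^sup>2)"
    using assms \<open>U > 0\<close> by (intro mult_two_mult_le_sum_squares) (auto simp: abs_mult intro!: mult_left_mono)
  have "\<bar>e1 - e2\<bar> * M * b\<^sup>2 \<le> (2 * Eb) * M * b\<^sup>2"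
    using assms by (intro mult_right_mono) auto
  moreover have "0 \<le> Eb * M * a\<^sup>2" "0 \<le> Eb * M * b\<^sup>2"
    using assms by auto
  moreover have "2 * a * (b / U) + 2 * b * (e2 * U * c - e1 * U * (a + c))
      = 2 * a * (b / U) + - (e1 * U) * (2 * a * b) + - ((e1 - e2) * U) * (2 * b * c)"
    by (simp add: algebra_simps)
  moreover have "(1 / m + 3 * Eb * M) * (a\<^sup>2 + b\<^sup>2) + \<bar>e1 - e2\<bar> * M * c\<^sup>2
      = (a\<^sup>2 + b\<^sup>2) / m + Eb * M * (a\<^sup>2 + b\<^sup>2) + (2 * Eb) * M * b\<^sup>2
        + 2 * (Eb * M * a\<^sup>2) + \<bar>e1 - e2\<bar> * M * c\<^sup>2"
    by (simp add: algebra_simps add_divide_distrib)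
  moreover have "\<bar>e1 - e2\<bar> * M * (b\<^sup>2 + c\<^sup>2) = \<bar>e1 - e2\<bar> * M * b\<^sup>2 + \<bar>e1 - e2\<bar> * M * c\<^sup>2"
    by (simp add: algebra_simps)
  ultimately show ?thesis
    using t1 t2 t3 by linarith
qed

locale sturm_liouville =
  fixes u u' u'' :: "real \<Rightarrow> real" and m M D1 D2 :: real
  assumes u_deriv: "\<And>x. x \<in> {0..pi} \<Longrightarrow> (u has_real_derivative u' x) (at x within {0..pi})"
    and u'_deriv: "\<And>x. x \<in> {0..pi} \<Longrightarrow> (u' has_real_derivative u'' x) (at x within {0..pi})"
    and m_pos: "0 < m"
    and u_ge: "\<And>x. x \<in> {0..pi} \<Longrightarrow> m \<le> u x"
    and u_le: "\<And>x. x \<in> {0..pi} \<Longrightarrow> u x \<le> M"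
    and u'_bound: "\<And>x. x \<in> {0..pi} \<Longrightarrow> \<bar>u' x\<bar> \<le> D1"
    and u''_bound: "\<And>x. x \<in> {0..pi} \<Longrightarrow> \<bar>u'' x\<bar> \<le> D2"

lemma sturm_liouville_if_C2_pos:
  assumes "C2_on_0pi u" and "\<forall>x\<in>{0..pi}. u x > 0"
  obtains u' u'' m M D1 D2 where "sturm_liouville u u' u'' m M D1 D2"
proof -
  obtain u' u'' where du: "\<forall>x\<in>{0..pi}. (u has_real_derivative u' x) (at x within {0..pi})"
    and du': "\<forall>x\<in>{0..pi}. (u' has_real_derivative u'' x) (at x within {0..pi})"
    and "continuous_on {0..pi} u''"
    using assms(1) unfolding C2_on_0pi_def by blast
  moreover have "continuous_on {0..pi} u" "continuous_on {0..pi} u'"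
    using du du' by (auto intro: DERIV_continuous_on)
  ultimately have "compact (u ` {0..pi})" "compact (u' ` {0..pi})" "compact (u'' ` {0..pi})"
    by (auto intro: compact_continuous_image)
  then obtain M D1 D2 where "\<forall>x\<in>{0..pi}. \<bar>u x\<bar> \<le> M \<and> \<bar>u' x\<bar> \<le> D1 \<and> \<bar>u'' x\<bar> \<le> D2"
    by (metis compact_imp_bounded bounded_iff imageI real_norm_def)
  moreover obtain x0 where "x0 \<in> {0..pi}" "\<forall>x\<in>{0..pi}. u x0 \<le> u x"
    using continuous_attains_inf[OF compact_Icc _ \<open>continuous_on {0..pi} u\<close>] by auto
  ultimately have "sturm_liouville u u' u'' (u x0) M D1 D2"
    using du du' assms(2) by unfold_locales (auto simp: abs_le_iff)
  then show ?thesis using that by blast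
qed

context sturm_liouville
begin

lemma u_pos: "x \<in> {0..pi} \<Longrightarrow> 0 < u x"
  using m_pos u_ge by force

lemma m_le_M: "m \<le> M"
  using u_ge[of 0] u_le[of 0] by simp

lemma D1_nonneg: "0 \<le> D1"
  using order_trans[OF abs_ge_zero u'_bound[of 0]] by simp

lemma D2_nonneg: "0 \<le> D2"
  using order_trans[OF abs_ge_zero u''_bound[of 0]] by simp

(* psi stands for the flux u phi'; the first-order form never needs phi''. *)
definition sl_system :: "real \<Rightarrow> (real \<Rightarrow> real) \<Rightarrow> (real \<Rightarrow> real) \<Rightarrow> bool" where
  "sl_system ev \<phi> \<psi> \<longleftrightarrow> (\<forall>x\<in>{0..pi}.
     (\<phi> has_real_derivative \<psi> x / u x) (at x within {0..pi}) \<and>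
     (\<psi> has_real_derivative - ev * u x * \<phi> x) (at x within {0..pi}))"

lemma sl_systemD:
  assumes "sl_system ev \<phi> \<psi>" and "x \<in> {0..pi}"
  shows "(\<phi> has_real_derivative \<psi> x / u x) (at x within {0..pi})"
    and "(\<psi> has_real_derivative - ev * u x * \<phi> x) (at x within {0..pi})"
  using assms unfolding sl_system_def by auto

lemma sl_system_zero: "sl_system ev (\<lambda>_. 0) (\<lambda>_. 0)"
  unfolding sl_system_def by simp

lemma sl_system_cmult:
  assumes "sl_system ev \<phi> \<psi>"
  shows "sl_system ev (\<lambda>x. c * \<phi> x) (\<lambda>x. c * \<psi> x)"
  unfolding sl_system_def
  using DERIV_cmult[OF sl_systemD(1)[OF assms], of _ c] DERIV_cmult[OF sl_systemD(2)[OF assms], of _ c]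
  by (simp add: algebra_simps)

definition growth_rate :: "real \<Rightarrow> real" where
  "growth_rate Eb = 1 / m + 3 * Eb * M"

lemma growth_rate_pos: "0 \<le> Eb \<Longrightarrow> 0 < growth_rate Eb"
  unfolding growth_rate_def using m_pos m_le_M by (simp add: add_pos_nonneg)

lemma sl_system_difference_bound:
  assumes s1: "sl_system e1 \<phi>1 \<psi>1" and s2: "sl_system e2 \<phi>2 \<psi>2"
    and "\<bar>e1\<bar> \<le> Eb" "\<bar>e2\<bar> \<le> Eb" and \<phi>2_bound: "\<And>x. x \<in> {0..pi} \<Longrightarrow> (\<phi>2 x)\<^sup>2 \<le> Mb"
    and "x \<in> {0..pi}"
  shows "(\<phi>1 x - \<phi>2 x)\<^sup>2 + (\<psi>1 x - \<psi>2 x)\<^sup>2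
    \<le> ((\<phi>1 0 - \<phi>2 0)\<^sup>2 + (\<psi>1 0 - \<psi>2 0)\<^sup>2 + \<bar>e1 - e2\<bar> * M * Mb / growth_rate Eb)
       * exp (growth_rate Eb * pi)"
proof -
  define A where "A = growth_rate Eb"
  define B where "B = \<bar>e1 - e2\<bar> * M * Mb"
  define F where "F y = (\<phi>1 y - \<phi>2 y)\<^sup>2 + (\<psi>1 y - \<psi>2 y)\<^sup>2" for y
  have "A > 0" unfolding A_def using assms by (intro growth_rate_pos) linarith
  have "0 \<le> Mb"
    using order_trans[OF zero_le_power2 \<phi>2_bound[of 0]] by simp
  then have "B \<ge> 0" unfolding B_def using m_pos m_le_M by simp
  let ?F' = "\<lambda>y. 2 * (\<phi>1 y - \<phi>2 y) * ((\<psi>1 y - \<psi>2 y) / u y)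
    + 2 * (\<psi>1 y - \<psi>2 y) * (e2 * u y * \<phi>2 y - e1 * u y * ((\<phi>1 y - \<phi>2 y) + \<phi>2 y))"
  have "F x + B / A \<le> (F 0 + B / A) * exp (A * (x - 0))"
  proof (rule gronwall_linear[OF \<open>A > 0\<close> _ _ \<open>x \<in> {0..pi}\<close>])
    fix y assume y: "y \<in> {0..pi}"
    show "(F has_real_derivative ?F' y) (at y within {0..pi})"
      unfolding F_def using u_pos[OF y]
      by (auto intro!: derivative_eq_intros sl_systemD[OF s1 y] sl_systemD[OF s2 y]
          simp: field_simps power2_eq_square)
    have "\<bar>e1 - e2\<bar> * M * (\<phi>2 y)\<^sup>2 \<le> B"
      unfolding B_def using \<phi>2_bound[OF y] m_pos m_le_M by (intro mult_left_mono) auto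
    then show "?F' y \<le> A * F y + B"
      using difference_energy_growth[OF m_pos u_ge[OF y] u_le[OF y] assms(3,4),
          of "\<phi>1 y - \<phi>2 y" "\<psi>1 y - \<psi>2 y" "\<phi>2 y"]
      unfolding A_def F_def growth_rate_def by linarith
  qed
  also have "\<dots> \<le> (F 0 + B / A) * exp (A * pi)"
    using \<open>A > 0\<close> \<open>B \<ge> 0\<close> \<open>x \<in> {0..pi}\<close> unfolding F_def by (intro mult_left_mono) auto
  finally show ?thesis
    using \<open>A > 0\<close> \<open>B \<ge> 0\<close> divide_nonneg_pos[OF \<open>B \<ge> 0\<close> \<open>A > 0\<close>]
    unfolding A_def B_def F_def by linarith
qed

lemma sl_system_norm_bound:
  assumes "sl_system ev \<phi> \<psi>" and "\<bar>ev\<bar> \<le> Eb" and "x \<in> {0..pi}"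
  shows "(\<phi> x)\<^sup>2 + (\<psi> x)\<^sup>2 \<le> ((\<phi> 0)\<^sup>2 + (\<psi> 0)\<^sup>2) * exp (growth_rate Eb * pi)"
  using sl_system_difference_bound[OF assms(1) sl_system_zero assms(2,2) _ assms(3), of 0] by simp

lemma sl_system_eq_0:
  assumes "sl_system ev \<phi> \<psi>" and "\<phi> 0 = 0" "\<psi> 0 = 0" and "x \<in> {0..pi}"
  shows "\<phi> x = 0"
proof -
  have "(\<phi> x)\<^sup>2 + (\<psi> x)\<^sup>2 \<le> 0"
    using sl_system_norm_bound[OF assms(1) order_refl assms(4)] assms(2,3) by simp
  then have "(\<phi> x)\<^sup>2 \<le> 0"
    using zero_le_power2[of "\<psi> x"] by linarith
  then show ?thesis
    by simp
qed

lemma eigenvalue_imp_normalized_solution: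
  assumes "dirichlet_SL_eigenvalue u ev"
  obtains \<phi> \<psi> where "sl_system ev \<phi> \<psi>" "\<phi> 0 = 0" "\<phi> pi = 0" "\<psi> 0 = 1"
proof -
  obtain \<phi> \<phi>' where d1: "\<forall>x\<in>{0..pi}. (\<phi> has_real_derivative \<phi>' x) (at x within {0..pi})"
    and d2: "\<forall>x\<in>{0..pi}. ((\<lambda>y. u y * \<phi>' y) has_real_derivative - ev * u x * \<phi> x) (at x within {0..pi})"
    and boundary: "\<phi> 0 = 0" "\<phi> pi = 0" and nontrivial: "\<exists>x\<in>{0..pi}. \<phi> x \<noteq> 0"
    using assms unfolding dirichlet_SL_eigenvalue_def by blast
  define \<psi> where "\<psi> y = u y * \<phi>' y" for y
  have sol: "sl_system ev \<phi> \<psi>"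
    unfolding sl_system_def \<psi>_def using d1 d2 u_pos by (simp add: less_imp_neq[symmetric])
  have "\<psi> 0 \<noteq> 0"
    using sl_system_eq_0[OF sol \<open>\<phi> 0 = 0\<close>] nontrivial by blast
  then show ?thesis
    using that[OF sl_system_cmult[OF sol, of "1 / \<psi> 0"]] boundary by simp
qed

lemma normalized_solution_imp_eigenvalue:
  assumes sol: "sl_system ev \<phi> \<psi>" and "\<phi> 0 = 0" "\<phi> pi = 0" "\<psi> 0 = 1"
  shows "dirichlet_SL_eigenvalue u ev"
  unfolding dirichlet_SL_eigenvalue_def
proof (rule exI[of _ \<phi>], rule exI[of _ "\<lambda>x. \<psi> x / u x"], intro conjI ballI)
  fix x :: real assume x: "x \<in> {0..pi}"
  show "(\<phi> has_real_derivative \<psi> x / u x) (at x within {0..pi})"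
    using sl_systemD(1)[OF sol x] .
  show "((\<lambda>y. u y * (\<psi> y / u y)) has_real_derivative - ev * u x * \<phi> x) (at x within {0..pi})"
    by (rule has_field_derivative_transform_within[OF sl_systemD(2)[OF sol x] zero_less_one x])
      (simp add: u_pos less_imp_neq[symmetric])
next
  show "\<exists>x\<in>{0..pi}. \<phi> x \<noteq> 0"
  proof (rule ccontr)
    assume "\<not> (\<exists>x\<in>{0..pi}. \<phi> x \<noteq> 0)"
    then have "(\<phi> has_real_derivative 0) (at 0 within {0..pi})"
      by (intro has_field_derivative_transform_within[OF DERIV_const zero_less_one]) auto
    moreover have "at (0::real) within {0..pi} \<noteq> bot"
      using at_within_Icc_at_right[OF pi_gt_zero] by simp
    ultimately have "\<psi> 0 / u 0 = 0"
      using has_field_derivative_unique sl_systemD(1)[OF sol, of 0] by force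
    then show False
      using \<open>\<psi> 0 = 1\<close> u_pos[of 0] by simp
  qed
qed (use assms in auto)

lemma sl_system_uniform_limit:
  assumes sol: "\<And>n. sl_system (e n) (\<phi> n) (\<psi> n)" and "e \<longlonglongrightarrow> L"
    and \<phi>_bound: "\<And>n x. x \<in> {0..pi} \<Longrightarrow> \<bar>\<phi> n x\<bar> \<le> B"
    and \<phi>_near: "\<And>n x. x \<in> {0..pi} \<Longrightarrow> \<bar>\<phi> n x - \<Phi> x\<bar> \<le> r n"
    and \<psi>_near: "\<And>n x. x \<in> {0..pi} \<Longrightarrow> \<bar>\<psi> n x - \<Psi> x\<bar> \<le> r n"
    and "r \<longlonglongrightarrow> 0"
  shows "sl_system L \<Phi> \<Psi>"
proof -
  have "(\<Phi> has_real_derivative \<Psi> x / u x) (at x within {0..pi})" if "x \<in> {0..pi}" for x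
  proof (rule has_real_derivative_seq_limit[where r="\<lambda>n. r n / m", OF _ sl_systemD(1)[OF sol]])
    fix n y assume y: "y \<in> {0..pi}"
    have "\<bar>\<psi> n y / u y - \<Psi> y / u y\<bar> = \<bar>\<psi> n y - \<Psi> y\<bar> / u y"
      using u_pos[OF y] by (simp add: diff_divide_distrib[symmetric])
    also have "\<dots> \<le> r n / m"
      using \<psi>_near[OF y, of n] u_ge[OF y] m_pos by (intro frac_le) auto
    finally show "\<bar>\<psi> n y / u y - \<Psi> y / u y\<bar> \<le> r n / m" .
  next
    show "(\<lambda>n. r n / m) \<longlonglongrightarrow> 0"
      using tendsto_divide_zero[OF \<open>r \<longlonglongrightarrow> 0\<close>] .
  qed (use that \<phi>_near tendsto_if_abs_diff_le[OF _ \<open>r \<longlonglongrightarrow> 0\<close>] in auto)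
  moreover have "(\<Psi> has_real_derivative - L * u x * \<Phi> x) (at x within {0..pi})" if "x \<in> {0..pi}" for x
  proof (rule has_real_derivative_seq_limit[where r="\<lambda>n. M * (\<bar>e n - L\<bar> * B + \<bar>L\<bar> * r n)",
        OF _ sl_systemD(2)[OF sol]])
    fix n y assume y: "y \<in> {0..pi}"
    have "- e n * u y * \<phi> n y - - L * u y * \<Phi> y = - (u y * (e n * \<phi> n y - L * \<Phi> y))"
      by (simp add: algebra_simps)
    then have "\<bar>- e n * u y * \<phi> n y - - L * u y * \<Phi> y\<bar> = u y * \<bar>e n * \<phi> n y - L * \<Phi> y\<bar>"
      by (simp only: abs_minus abs_mult abs_of_pos[OF u_pos[OF y]])
    also have "\<dots> \<le> M * (\<bar>e n - L\<bar> * B + \<bar>L\<bar> * r n)"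
      using u_le[OF y] u_pos[OF y]
      by (intro mult_mono abs_mult_diff_mult_le \<phi>_bound \<phi>_near y) auto
    finally show "\<bar>- e n * u y * \<phi> n y - - L * u y * \<Phi> y\<bar> \<le> M * (\<bar>e n - L\<bar> * B + \<bar>L\<bar> * r n)" .
  next
    show "(\<lambda>n. M * (\<bar>e n - L\<bar> * B + \<bar>L\<bar> * r n)) \<longlonglongrightarrow> 0"
      using \<open>e \<longlonglongrightarrow> L\<close> \<open>r \<longlonglongrightarrow> 0\<close> by (auto intro!: tendsto_eq_intros)
  qed (use that \<psi>_near tendsto_if_abs_diff_le[OF _ \<open>r \<longlonglongrightarrow> 0\<close>] in auto)
  ultimately show ?thesis
    unfolding sl_system_def by blast
qed

lemma sl_system_limit:
  assumes sol: "\<And>n. sl_system (e n) (\<phi> n) (\<psi> n)"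
    and init: "\<And>n. \<phi> n 0 = a" "\<And>n. \<psi> n 0 = b" and "e \<longlonglongrightarrow> L"
  shows "sl_system L (\<lambda>x. lim (\<lambda>n. \<phi> n x)) (\<lambda>x. lim (\<lambda>n. \<psi> n x))"
proof -
  have "Bseq e"
    using \<open>e \<longlonglongrightarrow> L\<close> by (rule convergent_imp_Bseq[OF convergentI])
  then obtain Eb where Eb: "\<And>n. \<bar>e n\<bar> \<le> Eb"
    unfolding Bseq_def by auto
  define Mb where "Mb = (a\<^sup>2 + b\<^sup>2) * exp (growth_rate Eb * pi)"
  define K where "K = M * Mb / growth_rate Eb * exp (growth_rate Eb * pi)"
  have norm: "(\<phi> n x)\<^sup>2 + (\<psi> n x)\<^sup>2 \<le> Mb" if "x \<in> {0..pi}" for n x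
    using sl_system_norm_bound[OF sol Eb that] by (simp add: Mb_def init)
  have \<phi>_sq: "(\<phi> n x)\<^sup>2 \<le> Mb" if "x \<in> {0..pi}" for n x
    using norm[OF that, of n] zero_le_power2[of "\<psi> n x"] by linarith
  have dist: "(\<phi> n x - \<phi> k x)\<^sup>2 + (\<psi> n x - \<psi> k x)\<^sup>2 \<le> K * \<bar>e n - e k\<bar>"
    if "x \<in> {0..pi}" for n k x
    using sl_system_difference_bound[OF sol sol Eb Eb \<phi>_sq that] by (simp add: init K_def ac_simps)
  have sqrt_bound: "\<bar>t\<bar> \<le> sqrt c" if "t\<^sup>2 \<le> c" for t c :: real
    using real_le_rsqrt[of "\<bar>t\<bar>" c] that by simp
  define r where "r n = sqrt (K * \<bar>e n - L\<bar>)" for n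
  have "r \<longlonglongrightarrow> 0"
    unfolding r_def using \<open>e \<longlonglongrightarrow> L\<close> by (auto intro!: tendsto_eq_intros)
  have \<phi>_near: "\<bar>\<phi> n x - lim (\<lambda>n. \<phi> n x)\<bar> \<le> r n" if "x \<in> {0..pi}" for n x
    unfolding r_def
    using dist[OF that] zero_le_power2[of "\<psi> _ x - \<psi> _ x"]
    by (intro sqrt_bound convergent_if_sq_dist_le(2)[OF \<open>e \<longlonglongrightarrow> L\<close>]) (smt (verit))
  have \<psi>_near: "\<bar>\<psi> n x - lim (\<lambda>n. \<psi> n x)\<bar> \<le> r n" if "x \<in> {0..pi}" for n x
    unfolding r_def
    using dist[OF that] zero_le_power2[of "\<phi> _ x - \<phi> _ x"]
    by (intro sqrt_bound convergent_if_sq_dist_le(2)[OF \<open>e \<longlonglongrightarrow> L\<close>]) (smt (verit))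
  show ?thesis
    using sqrt_bound[OF \<phi>_sq]
    by (intro sl_system_uniform_limit[OF sol \<open>e \<longlonglongrightarrow> L\<close> _ \<phi>_near \<psi>_near \<open>r \<longlonglongrightarrow> 0\<close>])
qed

lemma closed_eigenvalues: "closed {ev. dirichlet_SL_eigenvalue u ev}"
  unfolding closed_sequential_limits
proof (intro allI impI, elim conjE)
  fix e L assume eig: "\<forall>n. e n \<in> {ev. dirichlet_SL_eigenvalue u ev}" and "e \<longlonglongrightarrow> L"
  have "\<forall>n. \<exists>\<phi> \<psi>. sl_system (e n) \<phi> \<psi> \<and> \<phi> 0 = 0 \<and> \<phi> pi = 0 \<and> \<psi> 0 = 1"
    using eig eigenvalue_imp_normalized_solution by (metis mem_Collect_eq)
  then obtain \<phi> \<psi> where sol: "\<And>n. sl_system (e n) (\<phi> n) (\<psi> n)"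
    and boundary: "\<And>n. \<phi> n 0 = 0" "\<And>n. \<phi> n pi = 0" "\<And>n. \<psi> n 0 = 1"
    by (auto simp: choice_iff)
  show "L \<in> {ev. dirichlet_SL_eigenvalue u ev}"
    using normalized_solution_imp_eigenvalue[OF sl_system_limit[OF sol boundary(1,3) \<open>e \<longlonglongrightarrow> L\<close>]]
    by (simp add: boundary)
qed

section \<open>Large eigenvalues\<close>

definition energy :: "real \<Rightarrow> (real \<Rightarrow> real) \<Rightarrow> (real \<Rightarrow> real) \<Rightarrow> real \<Rightarrow> real" where
  "energy \<omega> \<phi> \<psi> y = (\<psi> y)\<^sup>2 + \<omega>\<^sup>2 * (u y)\<^sup>2 * (\<phi> y)\<^sup>2"

lemma energy_deriv:
  assumes "sl_system (\<omega>\<^sup>2) \<phi> \<psi>" and "y \<in> {0..pi}"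
  shows "(energy \<omega> \<phi> \<psi> has_real_derivative 2 * \<omega>\<^sup>2 * u y * u' y * (\<phi> y)\<^sup>2) (at y within {0..pi})"
  unfolding energy_def[abs_def] using u_pos[OF assms(2)]
  by (auto intro!: derivative_eq_intros sl_systemD[OF assms] u_deriv[OF assms(2)]
      simp: field_simps power2_eq_square)

lemma energy_le_energy_pi:
  assumes sol: "sl_system (\<omega>\<^sup>2) \<phi> \<psi>" and "x \<in> {0..pi}"
  shows "energy \<omega> \<phi> \<psi> x \<le> energy \<omega> \<phi> \<psi> pi * exp (2 * (D1 / m) * (pi - x))"
proof (rule gronwall_linear_backward[OF energy_deriv[OF sol] _ \<open>x \<in> {0..pi}\<close>])
  fix y assume y: "y \<in> {0..pi}"
  have "(2 * \<omega>\<^sup>2 * u y * (\<phi> y)\<^sup>2) * - u' y \<le> (2 * \<omega>\<^sup>2 * u y * (\<phi> y)\<^sup>2) * D1"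
    using u'_bound[OF y] u_pos[OF y] by (intro mult_left_mono) (auto simp: abs_le_iff)
  then have "- (2 * \<omega>\<^sup>2 * u y * u' y * (\<phi> y)\<^sup>2) \<le> (2 * D1 * \<omega>\<^sup>2 * (\<phi> y)\<^sup>2 * u y) * 1"
    by (simp add: mult_ac)
  also have "\<dots> \<le> (2 * D1 * \<omega>\<^sup>2 * (\<phi> y)\<^sup>2 * u y) * (u y / m)"
    using u_ge[OF y] u_pos[OF y] m_pos D1_nonneg
    by (intro mult_left_mono) (simp_all add: le_divide_eq_1_pos)
  also have "\<dots> = 2 * (D1 / m) * (\<omega>\<^sup>2 * (u y)\<^sup>2 * (\<phi> y)\<^sup>2)"
    by (simp add: power2_eq_square)
  also have "\<dots> \<le> 2 * (D1 / m) * energy \<omega> \<phi> \<psi> y"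
    unfolding energy_def using D1_nonneg m_pos by (intro mult_left_mono) auto
  finally show "- (2 * (D1 / m)) * energy \<omega> \<phi> \<psi> y \<le> 2 * \<omega>\<^sup>2 * u y * u' y * (\<phi> y)\<^sup>2"
    by simp
qed

lemma normalized_eigenfunction_bound:
  assumes sol: "sl_system (\<omega>\<^sup>2) \<phi> \<psi>" and "\<phi> 0 = 0" "\<phi> pi = 0" "\<psi> 0 = 1" and "0 < \<omega>"
  shows "\<psi> pi \<noteq> 0" and "x \<in> {0..pi} \<Longrightarrow> \<bar>\<phi> x\<bar> \<le> \<bar>\<psi> pi\<bar> * exp (D1 / m * pi) / (\<omega> * m)"
proof -
  have energy_bound: "energy \<omega> \<phi> \<psi> x \<le> (\<psi> pi)\<^sup>2 * exp (2 * (D1 / m) * pi)" if x: "x \<in> {0..pi}" for x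
  proof -
    have "2 * (D1 / m) * (pi - x) \<le> 2 * (D1 / m) * pi"
      using x D1_nonneg m_pos by (intro mult_left_mono) auto
    moreover have "energy \<omega> \<phi> \<psi> pi = (\<psi> pi)\<^sup>2"
      using \<open>\<phi> pi = 0\<close> by (simp add: energy_def)
    ultimately show ?thesis
      using energy_le_energy_pi[OF sol x]
      by (simp only: \<open>energy \<omega> \<phi> \<psi> pi = (\<psi> pi)\<^sup>2\<close>) (erule order_trans, intro mult_left_mono; simp)
  qed
  then show "\<psi> pi \<noteq> 0"
    using \<open>\<phi> 0 = 0\<close> \<open>\<psi> 0 = 1\<close> by (fastforce simp: energy_def)
  assume x: "x \<in> {0..pi}"
  have "(\<phi> x * (\<omega> * m))\<^sup>2 = \<omega>\<^sup>2 * (m\<^sup>2 * (\<phi> x)\<^sup>2)"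
    by (simp add: power_mult_distrib mult_ac)
  also have "\<dots> \<le> \<omega>\<^sup>2 * ((u x)\<^sup>2 * (\<phi> x)\<^sup>2)"
    using u_ge[OF x] m_pos by (intro mult_left_mono mult_right_mono power_mono) auto
  also have "\<dots> \<le> energy \<omega> \<phi> \<psi> x"
    unfolding energy_def by (simp add: mult.assoc)
  also have "\<dots> \<le> (\<psi> pi)\<^sup>2 * (exp (D1 / m * pi))\<^sup>2"
    using energy_bound[OF x] by (simp add: mult.assoc flip: exp_double)
  also have "\<dots> = (\<psi> pi * exp (D1 / m * pi))\<^sup>2"
    by (simp add: power_mult_distrib)
  finally have "\<bar>\<phi> x\<bar> * (\<omega> * m) \<le> \<bar>\<psi> pi\<bar> * exp (D1 / m * pi)"
    using \<open>0 < \<omega>\<close> m_pos by (simp add: abs_le_square_iff[symmetric] abs_mult)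
  then show "\<bar>\<phi> x\<bar> \<le> \<bar>\<psi> pi\<bar> * exp (D1 / m * pi) / (\<omega> * m)"
    using \<open>0 < \<omega>\<close> m_pos by (simp add: field_simps)
qed

definition liouville_remainder :: "real \<Rightarrow> real" where
  "liouville_remainder y = (u' y)\<^sup>2 / (4 * sqrt (u y) ^ 3) - u'' y / (2 * sqrt (u y))"

(*
  The Wronskian u (phi0 phi' - phi phi0') of phi with the Liouville approximation
  phi0 y = sin (omega y) / sqrt (u y). Since phi0 solves the equation up to the bounded
  defect liouville_remainder y * sin (omega y), the Wronskian changes on [0, pi] only by
  O(sup |phi|) = O(1/omega), while its value at pi is psi pi * phi0 pi.
*)
definition liouville_wronskian :: "real \<Rightarrow> (real \<Rightarrow> real) \<Rightarrow> (real \<Rightarrow> real) \<Rightarrow> real \<Rightarrow> real" where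
  "liouville_wronskian \<omega> \<phi> \<psi> y = \<psi> y * (sin (\<omega> * y) / sqrt (u y))
     - \<phi> y * (\<omega> * (sqrt (u y) * cos (\<omega> * y)) - u' y * sin (\<omega> * y) / (2 * sqrt (u y)))"

lemma liouville_remainder_bound:
  assumes "y \<in> {0..pi}"
  shows "\<bar>liouville_remainder y\<bar> \<le> D1\<^sup>2 / (4 * sqrt m ^ 3) + D2 / (2 * sqrt m)"
proof -
  have "sqrt m \<le> sqrt (u y)" "0 < sqrt m"
    using u_ge[OF assms] m_pos by auto
  have "(u' y)\<^sup>2 / (4 * sqrt (u y) ^ 3) \<le> D1\<^sup>2 / (4 * sqrt m ^ 3)"
  proof (rule frac_le)
    show "(u' y)\<^sup>2 \<le> D1\<^sup>2"
      using u'_bound[OF assms] by (simp add: abs_le_square_iff[symmetric] D1_nonneg)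
    show "4 * sqrt m ^ 3 \<le> 4 * sqrt (u y) ^ 3"
      using \<open>sqrt m \<le> sqrt (u y)\<close> \<open>0 < sqrt m\<close> by (simp add: power_mono)
  qed (use \<open>0 < sqrt m\<close> in simp_all)
  moreover have "\<bar>u'' y\<bar> / (2 * sqrt (u y)) \<le> D2 / (2 * sqrt m)"
    using u''_bound[OF assms] D2_nonneg \<open>sqrt m \<le> sqrt (u y)\<close> \<open>0 < sqrt m\<close> by (intro frac_le) auto
  moreover have "\<bar>liouville_remainder y\<bar>
      \<le> \<bar>(u' y)\<^sup>2 / (4 * sqrt (u y) ^ 3)\<bar> + \<bar>u'' y / (2 * sqrt (u y))\<bar>"
    unfolding liouville_remainder_def by (rule abs_triangle_ineq4)
  moreover have "\<bar>(u' y)\<^sup>2 / (4 * sqrt (u y) ^ 3)\<bar> = (u' y)\<^sup>2 / (4 * sqrt (u y) ^ 3)"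
    "\<bar>u'' y / (2 * sqrt (u y))\<bar> = \<bar>u'' y\<bar> / (2 * sqrt (u y))"
    using u_pos[OF assms] by (simp_all add: abs_mult)
  ultimately show ?thesis
    by linarith
qed

lemma liouville_wronskian_deriv:
  assumes sol: "sl_system (\<omega>\<^sup>2) \<phi> \<psi>" and y: "y \<in> {0..pi}"
  shows "(liouville_wronskian \<omega> \<phi> \<psi> has_real_derivative - \<phi> y * sin (\<omega> * y) * liouville_remainder y)
    (at y within {0..pi})"
proof -
  define g where "g x = sqrt (u x)" for x
  have "g y > 0" "u y = (g y)\<^sup>2"
    using u_pos[OF y] by (auto simp: g_def)
  have dg: "(g has_real_derivative u' y / (2 * g y)) (at y within {0..pi})"
    unfolding g_def using DERIV_chain2[OF DERIV_real_sqrt[OF u_pos[OF y]] u_deriv[OF y]]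
    by (simp add: field_simps)
  have "liouville_wronskian \<omega> \<phi> \<psi> = (\<lambda>y. \<psi> y * (sin (\<omega> * y) / g y)
     - \<phi> y * (\<omega> * (g y * cos (\<omega> * y)) - u' y * sin (\<omega> * y) / (2 * g y)))"
    by (simp add: fun_eq_iff liouville_wronskian_def g_def)
  moreover have "liouville_remainder y = (u' y)\<^sup>2 / (4 * g y ^ 3) - u'' y / (2 * g y)"
    by (simp add: liouville_remainder_def g_def)
  ultimately show ?thesis
    apply simp
    apply (rule derivative_eq_intros sl_systemD[OF sol y] dg u_deriv[OF y] u'_deriv[OF y] refl
        | simp add: \<open>g y > 0\<close> less_imp_neq[symmetric])+
    using \<open>g y > 0\<close> unfolding \<open>u y = (g y)\<^sup>2\<close>
    by (simp add: field_simps power2_eq_square power3_eq_cube)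
qed

lemma abs_sin_pi_le:
  assumes sol: "sl_system (\<omega>\<^sup>2) \<phi> \<psi>" and "\<phi> 0 = 0" "\<phi> pi = 0" "\<psi> 0 = 1" and "0 < \<omega>"
  shows "\<bar>sin (\<omega> * pi)\<bar>
    \<le> sqrt M * exp (D1 / m * pi) * (D1\<^sup>2 / (4 * sqrt m ^ 3) + D2 / (2 * sqrt m)) * pi / (\<omega> * m)"
proof -
  define Rb where "Rb = D1\<^sup>2 / (4 * sqrt m ^ 3) + D2 / (2 * sqrt m)"
  define P where "P = \<bar>\<psi> pi\<bar> * exp (D1 / m * pi) / (\<omega> * m)"
  have "Rb \<ge> 0" "P \<ge> 0"
    unfolding Rb_def P_def using m_pos \<open>0 < \<omega>\<close> D1_nonneg D2_nonneg by auto
  have "norm (- \<phi> y * sin (\<omega> * y) * liouville_remainder y) \<le> P * Rb" if "y \<in> {0..pi}" for y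
  proof -
    have "\<bar>\<phi> y\<bar> * \<bar>sin (\<omega> * y)\<bar> * \<bar>liouville_remainder y\<bar> \<le> P * 1 * Rb"
      using normalized_eigenfunction_bound(2)[OF assms that] liouville_remainder_bound[OF that] \<open>P \<ge> 0\<close>
      unfolding P_def Rb_def by (intro mult_mono) auto
    then show ?thesis
      by (simp add: abs_mult)
  qed
  then have "norm (liouville_wronskian \<omega> \<phi> \<psi> pi - liouville_wronskian \<omega> \<phi> \<psi> 0) \<le> P * Rb * norm (pi - 0)"
    by (intro field_differentiable_bound[OF _ liouville_wronskian_deriv[OF sol]]) auto
  then have "\<bar>\<psi> pi\<bar> * \<bar>sin (\<omega> * pi)\<bar> / sqrt (u pi) \<le> P * Rb * pi"
    using \<open>\<phi> 0 = 0\<close> \<open>\<phi> pi = 0\<close> u_pos[of pi] by (simp add: liouville_wronskian_def abs_mult)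
  then have "\<bar>\<psi> pi\<bar> * \<bar>sin (\<omega> * pi)\<bar> \<le> P * Rb * pi * sqrt (u pi)"
    using u_pos[of pi] by (simp add: pos_divide_le_eq)
  also have "\<dots> = \<bar>\<psi> pi\<bar> * (sqrt (u pi) * exp (D1 / m * pi) * Rb * pi / (\<omega> * m))"
    by (simp add: P_def)
  finally have "\<bar>sin (\<omega> * pi)\<bar> \<le> sqrt (u pi) * exp (D1 / m * pi) * Rb * pi / (\<omega> * m)"
    by (rule mult_left_le_imp_le) (use normalized_eigenfunction_bound(1)[OF assms] in simp)
  also have "\<dots> \<le> sqrt M * exp (D1 / m * pi) * Rb * pi / (\<omega> * m)"
    using u_le[of pi] \<open>Rb \<ge> 0\<close> \<open>0 < \<omega>\<close> m_pos
    by (intro divide_right_mono mult_right_mono) auto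
  finally show ?thesis
    unfolding Rb_def .
qed

lemma eigenvalue_abs_sin_bound:
  obtains C where "\<And>ev. dirichlet_SL_eigenvalue u ev \<Longrightarrow> 0 < ev \<Longrightarrow> \<bar>sin (pi * sqrt ev)\<bar> \<le> C / sqrt ev"
proof
  fix ev assume "dirichlet_SL_eigenvalue u ev" "0 < ev"
  then obtain \<phi> \<psi> where "sl_system ((sqrt ev)\<^sup>2) \<phi> \<psi>" "\<phi> 0 = 0" "\<phi> pi = 0" "\<psi> 0 = 1"
    using eigenvalue_imp_normalized_solution by auto
  from abs_sin_pi_le[OF this] \<open>0 < ev\<close>
  show "\<bar>sin (pi * sqrt ev)\<bar>
    \<le> (sqrt M * exp (D1 / m * pi) * (D1\<^sup>2 / (4 * sqrt m ^ 3) + D2 / (2 * sqrt m)) * pi / m) / sqrt ev"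
    by (simp add: mult.commute[of pi] mult.commute[of m])
qed

section \<open>Bounded windows contain finitely many mu_mn\<close>

lemma finite_sublevel_eigenvalues:
  fixes lam :: "nat \<Rightarrow> real"
  assumes lam_mono: "\<forall>n\<ge>1. lam n < lam (Suc n)"
    and lam_eig: "{lam n | n. n \<ge> 1} = {ev. dirichlet_SL_eigenvalue u ev}"
  shows "finite {n. 1 \<le> n \<and> lam n \<le> B}"
proof -
  have "strict_mono (\<lambda>k. lam (Suc k))"
    using lam_mono by (simp add: strict_mono_Suc_iff)
  moreover have "range (\<lambda>k. lam (Suc k)) = {lam n | n. n \<ge> 1}"
    by (auto simp: image_iff) (metis Suc_pred' less_eq_Suc_le)
  ultimately have "finite {k. lam (Suc k) \<le> B}"
    using closed_eigenvalues lam_eig by (intro finite_sublevel_if_strict_mono_closed_range) auto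
  moreover have "{n. 1 \<le> n \<and> lam n \<le> B} \<subseteq> Suc ` {k. lam (Suc k) \<le> B}"
  proof
    fix n assume "n \<in> {n. 1 \<le> n \<and> lam n \<le> B}"
    then show "n \<in> Suc ` {k. lam (Suc k) \<le> B}"
      by (intro image_eqI[of n Suc "n - 1"]) auto
  qed
  ultimately show ?thesis
    by (meson finite_imageI finite_subset)
qed

lemma finite_sublevel_mu:
  fixes lam :: "nat \<Rightarrow> real" and p q :: nat
  assumes lam_mono: "\<forall>n\<ge>1. lam n < lam (Suc n)"
    and lam_eig: "{lam n | n. n \<ge> 1} = {ev. dirichlet_SL_eigenvalue u ev}"
    and "0 < p" "even p" "odd q"
  shows "finite {(m, n). odd m \<and> 1 \<le> n \<and> \<bar>lam n - (real q / real p * real m)\<^sup>2\<bar> \<le> B}"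
proof -
  obtain C where "\<And>ev. dirichlet_SL_eigenvalue u ev \<Longrightarrow> 0 < ev \<Longrightarrow> \<bar>sin (pi * sqrt ev)\<bar> \<le> C / sqrt ev"
    using eigenvalue_abs_sin_bound by blast
  then obtain K where K: "\<And>ev k. dirichlet_SL_eigenvalue u ev \<Longrightarrow> 0 \<le> k \<Longrightarrow> \<forall>j::int. 1 / real p \<le> \<bar>j - k\<bar>
      \<Longrightarrow> \<bar>ev - k\<^sup>2\<bar> \<le> B \<Longrightarrow> k \<le> K"
    using bounded_if_near_square[of "{ev. dirichlet_SL_eigenvalue u ev}" C "1 / real p" B] \<open>0 < p\<close>
    by auto
  have "(m, n) \<in> {..nat \<lceil>real p * K\<rceil>} \<times> {n. 1 \<le> n \<and> lam n \<le> B + K\<^sup>2}"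
    if "odd m" "1 \<le> n" and near: "\<bar>lam n - (real q / real p * real m)\<^sup>2\<bar> \<le> B" for m n
  proof -
    have "lam n \<in> {ev. dirichlet_SL_eigenvalue u ev}"
      using lam_eig \<open>1 \<le> n\<close> by blast
    then have k_le: "real q / real p * real m \<le> K"
      using K near odd_fraction_dist_Ints[OF \<open>even p\<close> \<open>odd q\<close> \<open>odd m\<close>] by simp
    have "1 \<le> real q"
      using odd_pos[OF \<open>odd q\<close>] by linarith
    then have "real m \<le> real q * real m"
      using mult_right_mono[of 1 "real q" "real m"] by simp
    with k_le have "real m \<le> real p * K"
      using \<open>0 < p\<close> by (simp add: field_simps)
    moreover have "(real q / real p * real m)\<^sup>2 \<le> K\<^sup>2"
      using k_le by (intro power_mono) auto
    ultimately show ?thesis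
      using near \<open>1 \<le> n\<close> by simp linarith
  qed
  then have "{(m, n). odd m \<and> 1 \<le> n \<and> \<bar>lam n - (real q / real p * real m)\<^sup>2\<bar> \<le> B}
      \<subseteq> {..nat \<lceil>real p * K\<rceil>} \<times> {n. 1 \<le> n \<and> lam n \<le> B + K\<^sup>2}"
    by blast
  then show ?thesis
    by (rule finite_subset) (use finite_sublevel_eigenvalues[OF lam_mono lam_eig] in auto)
qed

end

theorem proposition2p1:
  fixes u :: "real \<Rightarrow> real" and p q :: nat and lam :: "nat \<Rightarrow> real"
  assumes u_C2: "C2_on_0pi u"
    and u_pos: "\<forall>x\<in>{0..pi}. u x > 0"
    and pq_pos: "p > 0" "q > 0"
    and pq_coprime: "coprime p q"
    and lam_mono: "\<forall>n\<ge>1. lam n < lam (Suc n)"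
    and lam_eig: "{lam n | n. n \<ge> 1} = {ev. dirichlet_SL_eigenvalue u ev}"
    and p_even: "even p"
  shows "\<forall>\<mu> \<in> {lam n - (real q / real p * real m)\<^sup>2 | m n. odd m \<and> n \<ge> 1}.
           \<not> \<mu> islimpt {lam n - (real q / real p * real m)\<^sup>2 | m n. odd m \<and> n \<ge> 1} \<and>
           finite {(m, n). odd m \<and> n \<ge> 1 \<and> lam n - (real q / real p * real m)\<^sup>2 = \<mu>}"
proof -
  obtain u' u'' m M D1 D2 where sl: "sturm_liouville u u' u'' m M D1 D2"
    using sturm_liouville_if_C2_pos[OF u_C2 u_pos] .
  have "odd q"
  proof
    assume "even q"
    then have "is_unit (2::nat)"
      using coprime_common_divisor[OF pq_coprime] p_even by blast
    then show False
      by simp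
  qed
  define I where "I = {(m, n). odd (m::nat) \<and> 1 \<le> (n::nat)}"
  define mu where "mu = (\<lambda>(m, n). lam n - (real q / real p * real m)\<^sup>2)"
  have "finite {i \<in> I. \<bar>mu i\<bar> \<le> B}" for B
    using sturm_liouville.finite_sublevel_mu[OF sl lam_mono lam_eig pq_pos(1) p_even \<open>odd q\<close>, of B]
    by (rule finite_subset[rotated]) (auto simp: I_def mu_def)
  note discrete = discrete_if_finite_sublevels[OF this]
  have "{lam n - (real q / real p * real m)\<^sup>2 | m n. odd m \<and> n \<ge> 1} = mu ` I"
    by (auto simp: I_def mu_def image_iff)
  moreover have "{(m, n). odd m \<and> n \<ge> 1 \<and> lam n - (real q / real p * real m)\<^sup>2 = x} = {i \<in> I. mu i = x}" for x
    by (auto simp: I_def mu_def)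
  ultimately show ?thesis
    using discrete by simp
qed

end
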